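(* Let $\mathcal G=(\mathcal V,\mathcal E)$ be a finite undirected graph, and let $\mathcal V_c\subseteq\mathcal V$ and $\mathcal V_a=\mathcal V\setminus\mathcal V_c$. Let $u$ be the mixed network coordination/anti-coordination game with set of coordinating players $\mathcal V_c$ and set of anti-coordinating players $\mathcal V_a$, i.e. each player $i\in\mathcal V$ has action set $\{-1,+1\}$ and utility $$u_i(x)=\xi_i\sum_{j\in\mathcal N_i}x_ix_j,\qquad \xi_i=+1\text{ if } i\in\mathcal V_c,\ \xi_i=-1\text{ if } i\in\mathcal V_a.$$ If $\mathcal V_c$ is cohesive in $\mathcal G$, then $u$ admits a pure strategy Nash equilibrium (in fact at least two).
   Context: $\mathcal N_i=\{j\in\mathcal V:\{i,j\}\in\mathcal E\}$ is the neighborhood of $i$. A pure strategy Nash equilibrium is a profile $x^*\in\{-1,+1\}^{\mathcal V}$ such that $u_i(x^* )\ge u_i(y)$ for every player $i$ and every profile $y$ differing from $x^*$ only in entry $i$. A subset $\mathcal R\subseteq\mathcal V$ is cohesive in $\mathcal G$ if, with $\mathcal S=\mathcal V\setminus\mathcal R$, every $i\in\mathcal R$ satisfies $|\mathcal N_i\cap\mathcal R|\ge|\mathcal N_i\cap\mathcal S|$. *)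

theory Defs
  imports Main "HOL-Library.FuncSet"
begin

definition undirected_graph :: "'a set \<Rightarrow> 'a set set \<Rightarrow> bool" where
  "undirected_graph V E \<longleftrightarrow> finite V \<and>
     (\<forall>e\<in>E. \<exists>a b. a \<in> V \<and> b \<in> V \<and> a \<noteq> b \<and> e = {a, b})"

definition neighborhood :: "'a set \<Rightarrow> 'a set set \<Rightarrow> 'a \<Rightarrow> 'a set" where
  "neighborhood V E i = {j \<in> V. {i, j} \<in> E}"

definition cohesive :: "'a set \<Rightarrow> 'a set set \<Rightarrow> 'a set \<Rightarrow> bool" where
  "cohesive V E R \<longleftrightarrow> R \<subseteq> V \<and>
     (\<forall>i\<in>R. card (neighborhood V E i \<inter> R) \<ge> card (neighborhood V E i \<inter> (V - R)))"

definition profiles :: "'a set \<Rightarrow> ('a \<Rightarrow> int) set" where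
  "profiles V = V \<rightarrow>\<^sub>E {-1, 1}"

definition xi :: "'a set \<Rightarrow> 'a \<Rightarrow> int" where
  "xi Vc i = (if i \<in> Vc then 1 else -1)"

definition mixed_utility :: "'a set \<Rightarrow> 'a set set \<Rightarrow> 'a set \<Rightarrow> 'a \<Rightarrow> ('a \<Rightarrow> int) \<Rightarrow> int" where
  "mixed_utility V E Vc i x = xi Vc i * (\<Sum>j\<in>neighborhood V E i. x i * x j)"

definition pure_nash :: "'a set \<Rightarrow> ('a \<Rightarrow> ('a \<Rightarrow> int) \<Rightarrow> int) \<Rightarrow> ('a \<Rightarrow> int) \<Rightarrow> bool" where
  "pure_nash V u x \<longleftrightarrow> x \<in> profiles V \<and>
     (\<forall>i\<in>V. \<forall>y\<in>profiles V. (\<forall>j\<in>V. j \<noteq> i \<longrightarrow> y j = x j) \<longrightarrow> u i x \<ge> u i y)"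

end

theory Submission
  imports Defs
begin

text \<open>
  Fix every coordinating player at +1 and let the anticoordinating players minimise
  the agreement, the sum of \<open>x i * x j\<close> over ordered pairs of adjacent players.
  Flipping player \<open>k\<close> changes it by \<open>-4 * x k * (\<Sum>j\<in>N k. x j)\<close>, which is
  \<open>4 * u k x\<close> when \<open>k\<close> anticoordinates, so at a minimiser these players have
  nonnegative utility; a coordinating player gets at least
  \<open>|N i \<inter> Vc| - |N i - Vc| \<ge> 0\<close> by cohesiveness. A unilateral deviation negates the
  deviator's utility, so a profile with nonnegative utilities is an equilibrium,
  and so is its global negation.
\<close>

lemma neighborhood_subset: "neighborhood V E i \<subseteq> V"
  by (auto simp: neighborhood_def)

lemma finite_neighborhood: "undirected_graph V E \<Longrightarrow> finite (neighborhood V E i)"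
  unfolding undirected_graph_def by (meson finite_subset neighborhood_subset)

lemma not_in_own_neighborhood: "undirected_graph V E \<Longrightarrow> i \<notin> neighborhood V E i"
  unfolding undirected_graph_def neighborhood_def
  by (metis (no_types, lifting) doubleton_eq_iff insert_absorb2 mem_Collect_eq)

lemma neighborhood_sym: "i \<in> V \<Longrightarrow> j \<in> neighborhood V E i \<longleftrightarrow> j \<in> V \<and> i \<in> neighborhood V E j"
  unfolding neighborhood_def by (auto simp: insert_commute)

lemma sum_neighbors_pointing_to:
  assumes "undirected_graph V E" "k \<in> V"
  shows "(\<Sum>a\<in>V. \<Sum>b\<in>neighborhood V E a. if b = k then g a else 0) = (\<Sum>a\<in>neighborhood V E k. g a)"
proof -
  have "finite V" using assms(1) unfolding undirected_graph_def by simp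
  then have "(\<Sum>a\<in>V. \<Sum>b\<in>neighborhood V E a. if b = k then g a else 0)
      = (\<Sum>a\<in>{a \<in> V. k \<in> neighborhood V E a}. g a)"
    using finite_neighborhood[OF assms(1)] by (simp add: sum.delta' sum.inter_filter)
  also have "{a \<in> V. k \<in> neighborhood V E a} = neighborhood V E k"
    using neighborhood_sym[OF assms(2)] by blast
  finally show ?thesis .
qed

lemma profile_value: "x \<in> profiles V \<Longrightarrow> i \<in> V \<Longrightarrow> x i = 1 \<or> x i = -1"
  unfolding profiles_def by auto

lemma unilateral_deviation_cases:
  assumes "x \<in> profiles V" "y \<in> profiles V" "i \<in> V" "\<forall>j\<in>V. j \<noteq> i \<longrightarrow> y j = x j"
  shows "y = x \<or> y i = - x i"
proof (cases "y i = x i")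
  case True
  with assms have "y j = x j" for j
    by (cases "j \<in> V") (auto simp: profiles_def PiE_def extensional_def)
  then show ?thesis by auto
next
  case False
  then show ?thesis using profile_value[OF assms(1,3)] profile_value[OF assms(2,3)] by auto
qed

lemma mixed_utility_own_flip:
  assumes "undirected_graph V E" "y i = - x i" "\<forall>j\<in>V. j \<noteq> i \<longrightarrow> y j = x j"
  shows "mixed_utility V E Vc i y = - mixed_utility V E Vc i x"
proof -
  have "(\<Sum>j\<in>neighborhood V E i. y i * y j) = (\<Sum>j\<in>neighborhood V E i. - (x i * x j))"
    using assms not_in_own_neighborhood[OF assms(1), of i] neighborhood_subset[of V E i]
    by (intro sum.cong) auto
  then show ?thesis unfolding mixed_utility_def by (simp add: sum_negf)
qed

lemma pure_nash_if_mixed_utility_nonneg: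
  assumes G: "undirected_graph V E" and x: "x \<in> profiles V"
    and nonneg: "\<And>i. i \<in> V \<Longrightarrow> mixed_utility V E Vc i x \<ge> 0"
  shows "pure_nash V (mixed_utility V E Vc) x"
  unfolding pure_nash_def
proof (intro conjI x ballI impI)
  fix i y assume i: "i \<in> V" and y: "y \<in> profiles V" and agree: "\<forall>j\<in>V. j \<noteq> i \<longrightarrow> y j = x j"
  from unilateral_deviation_cases[OF x y i agree]
  show "mixed_utility V E Vc i y \<le> mixed_utility V E Vc i x"
  proof
    assume "y i = - x i"
    then show ?thesis using mixed_utility_own_flip[OF G _ agree] nonneg[OF i] by simp
  qed simp
qed

definition negate_profile :: "'a set \<Rightarrow> ('a \<Rightarrow> int) \<Rightarrow> 'a \<Rightarrow> int" where
  "negate_profile V x = restrict (\<lambda>i. - x i) V"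

lemma negate_profile_in_profiles: "x \<in> profiles V \<Longrightarrow> negate_profile V x \<in> profiles V"
  unfolding profiles_def negate_profile_def by auto

lemma negate_profile_involution: "x \<in> profiles V \<Longrightarrow> negate_profile V (negate_profile V x) = x"
  unfolding profiles_def negate_profile_def by (auto simp: PiE_def extensional_def)

lemma negate_profile_neq:
  assumes "x \<in> profiles V" "V \<noteq> {}"
  shows "negate_profile V x \<noteq> x"
proof
  obtain v where v: "v \<in> V" using assms(2) by blast
  assume "negate_profile V x = x"
  then have "- x v = x v" using v unfolding negate_profile_def by (metis restrict_apply')
  then show False using profile_value[OF assms(1) v] by auto
qed

lemma mixed_utility_negate_profile:
  "i \<in> V \<Longrightarrow> mixed_utility V E Vc i (negate_profile V x) = mixed_utility V E Vc i x"
  unfolding mixed_utility_def negate_profile_def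
  using neighborhood_subset[of V E i] by (auto intro!: arg_cong[where f="(*) (xi Vc i)"] sum.cong)

lemma pure_nash_negate_profile:
  assumes nash: "pure_nash V (mixed_utility V E Vc) x"
  shows "pure_nash V (mixed_utility V E Vc) (negate_profile V x)"
  unfolding pure_nash_def
proof (intro conjI ballI impI)
  have x: "x \<in> profiles V" using nash unfolding pure_nash_def by blast
  then show "negate_profile V x \<in> profiles V" by (rule negate_profile_in_profiles)
  fix i y assume i: "i \<in> V" and y: "y \<in> profiles V"
    and agree: "\<forall>j\<in>V. j \<noteq> i \<longrightarrow> y j = negate_profile V x j"
  have "\<forall>j\<in>V. j \<noteq> i \<longrightarrow> negate_profile V y j = x j"
    using agree unfolding negate_profile_def by auto
  then have "mixed_utility V E Vc i (negate_profile V y) \<le> mixed_utility V E Vc i x"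
    using nash negate_profile_in_profiles[OF y] i unfolding pure_nash_def by blast
  then show "mixed_utility V E Vc i y \<le> mixed_utility V E Vc i (negate_profile V x)"
    using mixed_utility_negate_profile[OF i] negate_profile_involution[OF y] by metis
qed

definition agreement :: "'a set \<Rightarrow> 'a set set \<Rightarrow> ('a \<Rightarrow> int) \<Rightarrow> int" where
  "agreement V E x = (\<Sum>a\<in>V. \<Sum>b\<in>neighborhood V E a. x a * x b)"

lemma agreement_flip:
  assumes G: "undirected_graph V E" and k: "k \<in> V"
  shows "agreement V E (x(k := - x k)) - agreement V E x = -4 * (\<Sum>b\<in>neighborhood V E k. x k * x b)"
proof -
  let ?N = "neighborhood V E" and ?y = "x(k := - x k)"
  have term_diff: "?y a * ?y b - x a * x b
      = (if a = k then -2 * x k * x b else 0) + (if b = k then -2 * x a * x k else 0)"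
    if "b \<in> ?N a" for a b
    using that not_in_own_neighborhood[OF G, of a] by auto
  have "agreement V E ?y - agreement V E x
      = (\<Sum>a\<in>V. \<Sum>b\<in>?N a. if a = k then -2 * x k * x b else 0)
        + (\<Sum>a\<in>V. \<Sum>b\<in>?N a. if b = k then -2 * x a * x k else 0)"
    unfolding agreement_def sum_subtractf[symmetric] sum.distrib[symmetric]
    using term_diff by (intro sum.cong) auto
  also have "(\<Sum>a\<in>V. \<Sum>b\<in>?N a. if a = k then -2 * x k * x b else 0) = (\<Sum>b\<in>?N k. -2 * x k * x b)"
  proof -
    have "(\<Sum>a\<in>V. \<Sum>b\<in>?N a. if a = k then -2 * x k * x b else 0)
        = (\<Sum>a\<in>V. if a = k then (\<Sum>b\<in>?N k. -2 * x k * x b) else 0)"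
      by (intro sum.cong) auto
    moreover have "finite V" using G unfolding undirected_graph_def by simp
    ultimately show ?thesis using k by (simp add: sum.delta')
  qed
  also have "(\<Sum>a\<in>V. \<Sum>b\<in>?N a. if b = k then -2 * x a * x k else 0) = (\<Sum>a\<in>?N k. -2 * x a * x k)"
    by (rule sum_neighbors_pointing_to[OF G k])
  also have "(\<Sum>b\<in>?N k. -2 * x k * x b) + (\<Sum>a\<in>?N k. -2 * x a * x k)
      = -4 * (\<Sum>b\<in>?N k. x k * x b)"
    by (simp add: sum_distrib_left sum.distrib[symmetric] algebra_simps)
  finally show ?thesis .
qed

lemma mixed_utility_coordinator_nonneg:
  assumes G: "undirected_graph V E" and cohesive: "cohesive V E Vc"
    and x: "x \<in> profiles V" and x_Vc: "\<forall>j\<in>Vc. x j = 1" and i: "i \<in> Vc"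
  shows "mixed_utility V E Vc i x \<ge> 0"
proof -
  let ?N = "neighborhood V E i"
  have "(\<Sum>j\<in>?N - Vc. - 1) \<le> (\<Sum>j\<in>?N - Vc. x j)"
    using profile_value[OF x] neighborhood_subset[of V E i] by (intro sum_mono) fastforce
  then have "int (card (?N - Vc)) \<le> (\<Sum>j\<in>?N - Vc. x j) + 2 * int (card (?N - Vc))"
    by simp
  moreover have "(\<Sum>j\<in>?N. x j) = (\<Sum>j\<in>?N \<inter> Vc. x j) + (\<Sum>j\<in>?N - Vc. x j)"
    by (rule sum.Int_Diff[OF finite_neighborhood[OF G]])
  moreover have "(\<Sum>j\<in>?N \<inter> Vc. x j) = int (card (?N \<inter> Vc))"
    using x_Vc by simp
  moreover have "?N - Vc = ?N \<inter> (V - Vc)"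
    using neighborhood_subset[of V E i] by blast
  ultimately have "0 \<le> (\<Sum>j\<in>?N. x j)"
    using cohesive i unfolding cohesive_def by fastforce
  then show ?thesis
    unfolding mixed_utility_def xi_def using i x_Vc by simp
qed

lemma mixed_utility_anticoordinator_nonneg:
  assumes G: "undirected_graph V E" and k: "k \<in> V" "k \<notin> Vc"
    and no_gain: "agreement V E x \<le> agreement V E (x(k := - x k))"
  shows "mixed_utility V E Vc k x \<ge> 0"
  using agreement_flip[OF G k(1), of x] no_gain k(2)
  unfolding mixed_utility_def xi_def by simp

lemma exists_pure_nash_mixed:
  assumes G: "undirected_graph V E" and cohesive: "cohesive V E Vc"
  shows "\<exists>x. pure_nash V (mixed_utility V E Vc) x"
proof -
  define S where "S = {x \<in> profiles V. \<forall>j\<in>Vc. x j = 1}"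
  have "finite S"
    using G unfolding S_def profiles_def undirected_graph_def by (simp add: finite_PiE)
  moreover have "restrict (\<lambda>_. 1) V \<in> S"
    using cohesive unfolding S_def profiles_def cohesive_def by auto
  ultimately obtain x where min: "is_arg_min (agreement V E) (\<lambda>x. x \<in> S) x"
    using ex_is_arg_min_if_finite by blast
  then have x: "x \<in> profiles V" and x_Vc: "\<forall>j\<in>Vc. x j = 1"
    unfolding is_arg_min_def S_def by auto
  have "mixed_utility V E Vc i x \<ge> 0" if i: "i \<in> V" for i
  proof (cases "i \<in> Vc")
    case True
    then show ?thesis by (rule mixed_utility_coordinator_nonneg[OF G cohesive x x_Vc])
  next
    case False
    have "x(i := - x i) \<in> profiles V"
      using x i profile_value[OF x i] unfolding profiles_def by (auto simp: PiE_iff extensional_def)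
    then have "x(i := - x i) \<in> S"
      using x_Vc False unfolding S_def by auto
    then have "agreement V E x \<le> agreement V E (x(i := - x i))"
      using min unfolding is_arg_min_def by (meson not_less)
    then show ?thesis by (rule mixed_utility_anticoordinator_nonneg[OF G i False])
  qed
  then show ?thesis using pure_nash_if_mixed_utility_nonneg[OF G x] by blast
qed

theorem corollary1:
  fixes V :: "'a set" and E :: "'a set set" and Vc :: "'a set"
  assumes "undirected_graph V E"
    and "V \<noteq> {}"
    and "Vc \<subseteq> V"
    and "cohesive V E Vc"
  shows "\<exists>x y. x \<noteq> y \<and> pure_nash V (mixed_utility V E Vc) x \<and> pure_nash V (mixed_utility V E Vc) y"
proof -
  \<comment> \<open>\<open>Vc \<subseteq> V\<close> is already part of \<open>cohesive V E Vc\<close>.\<close>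
  obtain x where nash: "pure_nash V (mixed_utility V E Vc) x"
    using exists_pure_nash_mixed[OF assms(1,4)] by blast
  then have "negate_profile V x \<noteq> x"
    using negate_profile_neq[OF _ assms(2)] unfolding pure_nash_def by blast
  then show ?thesis using nash pure_nash_negate_profile[OF nash] by blast
qed

end
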